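(* Let $b_+,b_->0$, $\delta_+,\delta_-\in\mathbb{R}$ with $b_\pm+\delta_\pm>0$, $\delta_+\neq0$, $\delta_-\neq 0$, and $c>0$. Let $\hat H_{\mathrm I}(0)$ be the type-I interface Hamiltonian at quasi-momentum $k=0$ (defined in the context). Then $0$ is a two-fold eigenvalue of $\hat H_{\mathrm I}(0)$ (i.e. $0$ is an eigenvalue whose eigenspace in $\ell^2(\mathbb{Z};\mathbb{C}^6)$ is two-dimensional) if and only if $$(b_++\delta_+)(b_-+\delta_-)\,f_1(b_+,\delta_+)\,f_1(b_-,\delta_-)=c^2 .$$
   Context: Coefficients: for $n\in\mathbb Z$ let $b_n=b_+$ for $n\ge0$ and $b_n=b_-$ for $n\le -1$; $c_n=b_++\delta_+$ for $n\ge 0$, $c_{-1}=c$, $c_n=b_-+\delta_-$ for $n\le-2$; $d_n=b_++\delta_+$ for $n\ge0$, $d_n=b_-+\delta_-$ for $n\le -1$. For $k\in[-\pi,\pi)$, $\hat H_{\mathrm I}(k)$ is the bounded self-adjoint operator on $\ell^2(\mathbb Z;\mathbb C^6)$ acting on $u=\{(u_{j,n})_{j=1}^6\}_{n\in\mathbb Z}$ by $(\hat H_{\mathrm I}(k)u)_{1,n}=-b_nu_{4,n}-b_nu_{5,n}-c_{n-1}e^{-ik}u_{6,n-1}$, $(\hat H_{\mathrm I}(k)u)_{2,n}=-b_nu_{4,n}-d_ne^{ik}u_{5,n}-b_nu_{6,n}$, $(\hat H_{\mathrm I}(k)u)_{3,n}=-c_nu_{4,n+1}-b_nu_{5,n}-b_nu_{6,n}$,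 $(\hat H_{\mathrm I}(k)u)_{4,n}=-b_nu_{1,n}-b_nu_{2,n}-c_{n-1}u_{3,n-1}$, $(\hat H_{\mathrm I}(k)u)_{5,n}=-b_nu_{1,n}-d_ne^{-ik}u_{2,n}-b_nu_{3,n}$, $(\hat H_{\mathrm I}(k)u)_{6,n}=-c_ne^{ik}u_{1,n+1}-b_nu_{2,n}-b_nu_{3,n}$. For $b>0$, $\varepsilon>-b$, $\varepsilon\ne0$, put $t=(b+\varepsilon)/b$ and $\alpha=-t^2+2t-\frac4t+\frac4{t^2}$, $\beta=-t^3+t^2+t-3+\frac2t$, $\gamma=t^4-t^2+2t-1$, and $$f_1(b,\varepsilon)=\frac{-\alpha+\gamma-\sqrt{(\alpha-\gamma)^2-4\beta^2}}{2\beta}.$$ *)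

theory Defs
  imports "HOL-Analysis.Analysis" "HOL-Library.Function_Algebras"
begin

definition bcoef :: "real \<Rightarrow> real \<Rightarrow> int \<Rightarrow> real" where
  "bcoef bp bm n = (if n \<ge> 0 then bp else bm)"

definition ccoef :: "real \<Rightarrow> real \<Rightarrow> real \<Rightarrow> real \<Rightarrow> real \<Rightarrow> int \<Rightarrow> real" where
  "ccoef bp bm dp dm c n =
     (if n \<ge> 0 then bp + dp else if n = -1 then c else bm + dm)"

definition dcoef :: "real \<Rightarrow> real \<Rightarrow> real \<Rightarrow> real \<Rightarrow> int \<Rightarrow> real" where
  "dcoef bp bm dp dm n = (if n \<ge> 0 then bp + dp else bm + dm)"

definition HI :: "real \<Rightarrow> real \<Rightarrow> real \<Rightarrow> real \<Rightarrow> real \<Rightarrow> real \<Rightarrow>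
    (int \<Rightarrow> complex ^ 6) \<Rightarrow> (int \<Rightarrow> complex ^ 6)" where
  "HI bp bm dp dm c k u = (\<lambda>n.
     let b = (\<lambda>m. complex_of_real (bcoef bp bm m));
         cc = (\<lambda>m. complex_of_real (ccoef bp bm dp dm c m));
         d = (\<lambda>m. complex_of_real (dcoef bp bm dp dm m));
         e = cis k
     in vector [
       - b n * u n $ 4 - b n * u n $ 5 - cc (n - 1) * cnj e * u (n - 1) $ 6,
       - b n * u n $ 4 - d n * e * u n $ 5 - b n * u n $ 6,
       - cc n * u (n + 1) $ 4 - b n * u n $ 5 - b n * u n $ 6,
       - b n * u n $ 1 - b n * u n $ 2 - cc (n - 1) * u (n - 1) $ 3,
       - b n * u n $ 1 - d n * cnj e * u n $ 2 - b n * u n $ 3,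
       - cc n * e * u (n + 1) $ 1 - b n * u n $ 2 - b n * u n $ 3])"

definition l2seq :: "(int \<Rightarrow> complex ^ 6) \<Rightarrow> bool" where
  "l2seq u \<longleftrightarrow> (\<lambda>n. (norm (u n))\<^sup>2) summable_on UNIV"

definition cscale :: "complex \<Rightarrow> (int \<Rightarrow> complex ^ 6) \<Rightarrow> (int \<Rightarrow> complex ^ 6)" where
  "cscale a u = (\<lambda>n. a *s u n)"

definition eigenspace_HI :: "real \<Rightarrow> real \<Rightarrow> real \<Rightarrow> real \<Rightarrow> real \<Rightarrow> real \<Rightarrow> complex
    \<Rightarrow> (int \<Rightarrow> complex ^ 6) set" where
  "eigenspace_HI bp bm dp dm c k lam =
     {u. l2seq u \<and> HI bp bm dp dm c k u = cscale lam u}"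

definition f1 :: "real \<Rightarrow> real \<Rightarrow> real" where
  "f1 b eps = (let t = (b + eps) / b;
      al = - (t^2) + 2*t - 4/t + 4/t^2;
      be = - (t^3) + t^2 + t - 3 + 2/t;
      ga = t^4 - t^2 + 2*t - 1
    in (- al + ga - sqrt ((al - ga)^2 - 4*be^2)) / (2*be))"

end

theory Submission
  imports Defs
begin

(*
  At k = 0 all phases cis k equal 1, and H u = 0 splits into two copies of one scalar
  system for the triples (u1, u2, u3) and (u4, u5, u6). On each half-line this system has
  constant coefficients; with t = (b + delta) / b, eliminating y and z leaves the recurrence
  x_(m+2) = tau x_(m+1) - x_m with tau = (t^3 - t + 2) / t > 2. Its only decaying solutions
  are geometric with ratio lambda in (0, 1), the smaller root of lambda^2 - tau lambda + 1,
  so a square-summable zero mode is fixed by the two amplitudes x_0 and z_(-1). The two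
  equations at the interface say that these amplitudes lie in the kernel of the symmetric
  matrix [[P, c], [c, Q]] with P = -(b_+ + delta_+) f_1(b_+, delta_+) and Q likewise. Since
  c is nonzero, that kernel is a line if PQ = c^2 and trivial otherwise, so the eigenspace
  has dimension 2 or 0.
*)

section \<open>Decaying solutions on a half-line\<close>

definition tau :: "real \<Rightarrow> real" where
  "tau t = (t^3 - t + 2) / t"

(* With lambda = decay_rate t, the decaying solution on a half-line is
   (x_m, y_m, z_m) = lambda^m (1, y_ratio t, z_ratio t). *)
definition decay_rate :: "real \<Rightarrow> real" where
  "decay_rate t = (tau t - sqrt ((tau t)\<^sup>2 - 4)) / 2"

definition y_ratio :: "real \<Rightarrow> real" where
  "y_ratio t = (t * decay_rate t - 1) / (t - 1)"

definition z_ratio :: "real \<Rightarrow> real" where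
  "z_ratio t = - 1 - t * y_ratio t"

lemma tau_gt_2:
  assumes "0 < t" "t \<noteq> 1"
  shows "2 < tau t"
proof -
  have "tau t - 2 = (t - 1)\<^sup>2 * (t + 2) / t"
    using assms by (simp add: tau_def field_simps power2_eq_square power3_eq_cube)
  also have "\<dots> > 0"
    using assms by simp
  finally show ?thesis by simp
qed

lemma decay_rate_root:
  assumes "0 < t" "t \<noteq> 1"
  shows "(decay_rate t)\<^sup>2 - tau t * decay_rate t + 1 = 0"
proof -
  define T where "T = tau t"
  define s where "s = sqrt (T\<^sup>2 - 4)"
  have "2 * 2 < T * T"
    using tau_gt_2[OF assms] by (intro mult_strict_mono) (simp_all add: T_def)
  then have s2: "s * s = T * T - 4"
    by (simp add: s_def power2_eq_square)
  have "((T - s) / 2)\<^sup>2 - T * ((T - s) / 2) + 1 = (s * s - (T * T - 4)) / 4"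
    by (simp add: power2_eq_square field_simps)
  then show ?thesis
    using s2 by (simp add: decay_rate_def T_def[symmetric] s_def[symmetric])
qed

lemma decay_rate_pos_less_1:
  assumes "0 < t" "t \<noteq> 1"
  shows "0 < decay_rate t" "decay_rate t < 1"
proof -
  define T where "T = tau t"
  have T: "2 < T"
    using tau_gt_2[OF assms] by (simp add: T_def)
  have "sqrt (T\<^sup>2 - 4) < sqrt (T\<^sup>2)"
    by (rule real_sqrt_less_mono) simp
  then show "0 < decay_rate t"
    using T by (simp add: decay_rate_def T_def[symmetric])
  have "sqrt ((T - 2)\<^sup>2) < sqrt (T\<^sup>2 - 4)"
    using T by (intro real_sqrt_less_mono) (simp add: power2_eq_square algebra_simps)
  then show "decay_rate t < 1"
    using T by (simp add: decay_rate_def T_def[symmetric])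
qed

(* The defect w_m = X_(m+1) - l X_m satisfies w_(m+1) = L w_m,
   so it cannot tend to 0 unless it vanishes. *)
lemma decaying_recurrence_geometric:
  fixes X :: "nat \<Rightarrow> 'a::real_normed_vector" and l L :: real
  assumes rec: "\<And>m. X (Suc (Suc m)) = (l + L) *\<^sub>R X (Suc m) - (l * L) *\<^sub>R X m"
    and L: "1 \<le> \<bar>L\<bar>" and X: "X \<longlonglongrightarrow> 0"
  shows "X m = l ^ m *\<^sub>R X 0"
proof -
  define w where "w m = X (Suc m) - l *\<^sub>R X m" for m
  have "w (Suc m) = L *\<^sub>R w m" for m
    using rec[of m] by (simp add: w_def algebra_simps)
  then have w_pow: "w m = L ^ m *\<^sub>R w 0" for m
    by (induction m) simp_all
  have "w \<longlonglongrightarrow> 0"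
    unfolding w_def using tendsto_diff[OF LIMSEQ_Suc[OF X] tendsto_scaleR[OF tendsto_const X]] by simp
  moreover have "norm (w 0) \<le> norm (w m)" for m
  proof -
    have "1 * norm (w 0) \<le> \<bar>L\<bar> ^ m * norm (w 0)"
      using one_le_power[OF L] by (rule mult_right_mono) simp
    then show ?thesis
      by (simp add: w_pow[of m] power_abs)
  qed
  ultimately have "norm (w 0) \<le> 0"
    using LIMSEQ_le_const[OF tendsto_norm_zero] by blast
  then have "X (Suc m) = l *\<^sub>R X m" for m
    using w_pow[of m] by (simp add: w_def)
  then show ?thesis
    by (induction m) simp_all
qed

(* The zero-energy equations on one side of the interface, with couplings b and d = b + delta.
   On the negative half-line they hold for (z, y, x), read from the interface outwards. *)
definition half_line_eqs ::
    "real \<Rightarrow> real \<Rightarrow> (nat \<Rightarrow> 'a::real_vector) \<Rightarrow> (nat \<Rightarrow> 'a) \<Rightarrow> (nat \<Rightarrow> 'a) \<Rightarrow> bool" where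
  "half_line_eqs b d X Y Z \<longleftrightarrow> (\<forall>m.
     b *\<^sub>R X m + d *\<^sub>R Y m + b *\<^sub>R Z m = 0 \<and>
     d *\<^sub>R X (Suc m) + b *\<^sub>R Y m + b *\<^sub>R Z m = 0 \<and>
     b *\<^sub>R X (Suc m) + b *\<^sub>R Y (Suc m) + d *\<^sub>R Z m = 0)"

lemma half_line_eqs_normalize:
  fixes X Y Z :: "nat \<Rightarrow> 'a::real_vector"
  assumes "b \<noteq> 0"
  shows "half_line_eqs b d X Y Z \<longleftrightarrow> half_line_eqs 1 (d / b) X Y Z"
proof -
  have "b *\<^sub>R p + d *\<^sub>R q + b *\<^sub>R r = b *\<^sub>R (p + (d / b) *\<^sub>R q + r)"
    and "d *\<^sub>R p + b *\<^sub>R q + b *\<^sub>R r = b *\<^sub>R ((d / b) *\<^sub>R p + q + r)"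
    and "b *\<^sub>R p + b *\<^sub>R q + d *\<^sub>R r = b *\<^sub>R (p + q + (d / b) *\<^sub>R r)" for p q r :: 'a
    using assms by (simp_all add: scaleR_add_right)
  then show ?thesis
    using assms by (simp add: half_line_eqs_def)
qed

lemma half_line_eqs_geometric:
  assumes "0 < t" "t \<noteq> 1"
  shows "half_line_eqs 1 t (\<lambda>m. decay_rate t ^ m *\<^sub>R a)
           (\<lambda>m. decay_rate t ^ m *\<^sub>R y_ratio t *\<^sub>R a) (\<lambda>m. decay_rate t ^ m *\<^sub>R z_ratio t *\<^sub>R a)"
proof -
  define l g h where "l = decay_rate t" and "g = y_ratio t" and "h = z_ratio t"
  have g: "(t - 1) * g = t * l - 1"
    using assms by (simp add: g_def y_ratio_def l_def)
  have h: "h = - 1 - t * g"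
    by (simp add: h_def z_ratio_def g_def)
  have tau: "t * tau t = t^3 - t + 2"
    using assms by (simp add: tau_def)
  have "(t - 1) * (l * (1 + g) + t * h) = (t - 1) * l + l * ((t - 1) * g) - t * (t - 1) - t\<^sup>2 * ((t - 1) * g)"
    by (simp add: h algebra_simps power2_eq_square)
  also have "\<dots> = t * (l\<^sup>2 - tau t * l + 1)"
    unfolding g by (simp add: algebra_simps power2_eq_square power3_eq_cube tau)
  also have "\<dots> = 0"
    using decay_rate_root[OF assms] by (simp add: l_def)
  finally have e3: "l * (1 + g) + t * h = 0"
    using assms by simp
  have e1: "1 + t * g + h = 0" and e2: "t * l + g + h = 0"
    using g by (simp_all add: h algebra_simps)
  have "l ^ m *\<^sub>R a + t *\<^sub>R l ^ m *\<^sub>R g *\<^sub>R a + l ^ m *\<^sub>R h *\<^sub>R a = (l ^ m * (1 + t * g + h)) *\<^sub>R a"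
    and "t *\<^sub>R l ^ Suc m *\<^sub>R a + l ^ m *\<^sub>R g *\<^sub>R a + l ^ m *\<^sub>R h *\<^sub>R a = (l ^ m * (t * l + g + h)) *\<^sub>R a"
    and "l ^ Suc m *\<^sub>R a + l ^ Suc m *\<^sub>R g *\<^sub>R a + t *\<^sub>R l ^ m *\<^sub>R h *\<^sub>R a = (l ^ m * (l * (1 + g) + t * h)) *\<^sub>R a"
    for m
    by (simp_all add: algebra_simps)
  then show ?thesis
    by (simp add: half_line_eqs_def e1 e2 e3 flip: l_def g_def h_def)
qed

lemma half_line_eqs_elim:
  fixes X Y Z :: "nat \<Rightarrow> 'a::real_vector"
  assumes t: "0 < t" and eqs: "half_line_eqs 1 t X Y Z"
  shows "(t - 1) *\<^sub>R Y m = t *\<^sub>R X (Suc m) - X m"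
    and "Z m = - X m - t *\<^sub>R Y m"
    and "X (Suc (Suc m)) = tau t *\<^sub>R X (Suc m) - X m"
proof -
  have E1: "X m + t *\<^sub>R Y m + Z m = 0" and E2: "t *\<^sub>R X (Suc m) + Y m + Z m = 0"
    and E3: "X (Suc m) + Y (Suc m) + t *\<^sub>R Z m = 0" for m
    using eqs by (simp_all add: half_line_eqs_def)
  have "(t - 1) *\<^sub>R Y m - (t *\<^sub>R X (Suc m) - X m) = (X m + t *\<^sub>R Y m + Z m) - (t *\<^sub>R X (Suc m) + Y m + Z m)" for m
    by (simp add: algebra_simps)
  then show Y: "(t - 1) *\<^sub>R Y m = t *\<^sub>R X (Suc m) - X m" for m
    by (simp add: E1 E2)
  show Z: "Z m = - X m - t *\<^sub>R Y m" for m
    using E1[of m] by (simp add: algebra_simps eq_neg_iff_add_eq_0)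
  have "(t - 1) *\<^sub>R Z m = - (t - 1) *\<^sub>R X m - t *\<^sub>R ((t - 1) *\<^sub>R Y m)"
    by (simp add: Z algebra_simps)
  also have "\<dots> = X m - t\<^sup>2 *\<^sub>R X (Suc m)"
    unfolding Y by (simp add: algebra_simps power2_eq_square)
  finally have Zt: "(t - 1) *\<^sub>R Z m = X m - t\<^sup>2 *\<^sub>R X (Suc m)" .
  have tT: "t * tau t = t^3 - t + 2"
    using t by (simp add: tau_def)
  have "t *\<^sub>R (X (Suc (Suc m)) - tau t *\<^sub>R X (Suc m) + X m)
      = t *\<^sub>R X (Suc (Suc m)) - (t * tau t) *\<^sub>R X (Suc m) + t *\<^sub>R X m"
    by (simp add: algebra_simps)
  also have "\<dots> = (t - 1) *\<^sub>R (X (Suc m) + Y (Suc m) + t *\<^sub>R Z m)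
        - ((t - 1) *\<^sub>R Y (Suc m) - (t *\<^sub>R X (Suc (Suc m)) - X (Suc m)))
        - t *\<^sub>R ((t - 1) *\<^sub>R Z m - (X m - t\<^sup>2 *\<^sub>R X (Suc m)))"
    unfolding tT by (simp add: algebra_simps power2_eq_square power3_eq_cube scaleR_2)
  also have "\<dots> = 0"
    by (simp add: E3 Y Zt)
  finally have "X (Suc (Suc m)) - tau t *\<^sub>R X (Suc m) + X m = 0"
    using t by simp
  then show "X (Suc (Suc m)) = tau t *\<^sub>R X (Suc m) - X m"
    by (simp add: algebra_simps)
qed

lemma half_line_eqs_decaying:
  fixes X Y Z :: "nat \<Rightarrow> 'a::real_normed_vector"
  assumes t: "0 < t" "t \<noteq> 1" and eqs: "half_line_eqs 1 t X Y Z" and X: "X \<longlonglongrightarrow> 0"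
  shows "X m = decay_rate t ^ m *\<^sub>R X 0 \<and> Y m = decay_rate t ^ m *\<^sub>R y_ratio t *\<^sub>R X 0
    \<and> Z m = decay_rate t ^ m *\<^sub>R z_ratio t *\<^sub>R X 0"
proof -
  define l where "l = decay_rate t"
  note elim = half_line_eqs_elim[OF t(1) eqs]
  have l: "0 < l" "l < 1" "l * (tau t - l) = 1"
    using decay_rate_pos_less_1[OF t] decay_rate_root[OF t]
    by (simp_all add: l_def algebra_simps power2_eq_square)
  then have "tau t - l = 1 / l"
    by (simp add: field_simps)
  then have L: "1 \<le> \<bar>tau t - l\<bar>"
    using l by simp
  have Xm: "X m = l ^ m *\<^sub>R X 0" for m
  proof (rule decaying_recurrence_geometric[OF _ L X])
    show "X (Suc (Suc m)) = (l + (tau t - l)) *\<^sub>R X (Suc m) - (l * (tau t - l)) *\<^sub>R X m" for m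
      by (simp only: elim(3) l(3)) simp
  qed
  have g: "(t - 1) * y_ratio t = t * l - 1"
    using t by (simp add: y_ratio_def l_def)
  have Ym: "Y m = l ^ m *\<^sub>R y_ratio t *\<^sub>R X 0" for m
  proof -
    have "(t - 1) *\<^sub>R Y m = (t * l ^ Suc m - l ^ m) *\<^sub>R X 0"
      unfolding elim(1) Xm[of m] Xm[of "Suc m"] by (simp add: algebra_simps)
    also have "t * l ^ Suc m - l ^ m = (t - 1) * (y_ratio t * l ^ m)"
      unfolding mult.assoc[symmetric] g by (simp add: algebra_simps)
    finally have "(t - 1) *\<^sub>R Y m = (t - 1) *\<^sub>R l ^ m *\<^sub>R y_ratio t *\<^sub>R X 0"
      by simp
    then show ?thesis
      using t by (simp only: scaleR_cancel_left) simp
  qed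
  show ?thesis
    by (simp add: Xm[of m] Ym elim(2) z_ratio_def algebra_simps flip: l_def)
qed

section \<open>The function f_1\<close>

definition f1_alpha :: "real \<Rightarrow> real" where
  "f1_alpha t = - (t^2) + 2*t - 4/t + 4/t^2"

definition f1_beta :: "real \<Rightarrow> real" where
  "f1_beta t = - (t^3) + t^2 + t - 3 + 2/t"

definition f1_gamma :: "real \<Rightarrow> real" where
  "f1_gamma t = t^4 - t^2 + 2*t - 1"

lemma f1_beta_eq:
  assumes "0 < t"
  shows "f1_beta t = - (t - 1) * tau t"
  using assms by (simp add: f1_beta_def tau_def field_simps power2_eq_square power3_eq_cube)

lemma f1_gamma_minus_alpha:
  assumes "0 < t"
  shows "f1_gamma t - f1_alpha t = (t * tau t + 2 * t - 4) * tau t / t"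
  using assms
  by (simp add: f1_alpha_def f1_gamma_def tau_def field_simps power2_eq_square power3_eq_cube power4_eq_xxxx)

lemma f1_discriminant:
  assumes "0 < t"
  shows "(f1_alpha t - f1_gamma t)\<^sup>2 - 4 * (f1_beta t)\<^sup>2 = (tau t)\<^sup>2 * ((tau t)\<^sup>2 - 4)"
proof -
  define T where "T = tau t"
  have tT: "t * T = t^3 - t + 2"
    using assms by (simp add: T_def tau_def)
  have "(t * T + 2 * t - 4)\<^sup>2 - (2 * t * (t - 1))\<^sup>2 - t\<^sup>2 * (T\<^sup>2 - 4)
      = 2 * (t * T) * (2 * t - 4) + (2 * t - 4)\<^sup>2 - (2 * t * (t - 1))\<^sup>2 + 4 * t\<^sup>2"
    by (simp add: power2_eq_square algebra_simps)
  also have "\<dots> = 0"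
    unfolding tT by (simp add: power2_eq_square power3_eq_cube algebra_simps)
  finally have key: "(t * T + 2 * t - 4)\<^sup>2 - (2 * t * (t - 1))\<^sup>2 = t\<^sup>2 * (T\<^sup>2 - 4)"
    by simp
  have "(f1_alpha t - f1_gamma t)\<^sup>2 - 4 * (f1_beta t)\<^sup>2
      = ((t * T + 2 * t - 4) * T / t)\<^sup>2 - 4 * ((t - 1) * T)\<^sup>2"
    unfolding power2_commute[of "f1_alpha t"] f1_gamma_minus_alpha[OF assms] f1_beta_eq[OF assms]
    by (simp add: T_def power2_eq_square algebra_simps)
  also have "\<dots> = T\<^sup>2 * ((t * T + 2 * t - 4)\<^sup>2 - (2 * t * (t - 1))\<^sup>2) / t\<^sup>2"
    using assms by (simp add: field_simps power2_eq_square)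
  also have "\<dots> = T\<^sup>2 * (T\<^sup>2 - 4)"
    using assms by (simp add: key)
  finally show ?thesis
    by (simp add: T_def)
qed

lemma f1_eq_y_ratio:
  assumes "0 < b" "0 < b + e" "e \<noteq> 0"
  shows "(b + e) / b * f1 b e = - (1 + y_ratio ((b + e) / b))"
proof -
  define t where "t = (b + e) / b"
  have t: "0 < t" "t \<noteq> 1"
    using assms by (simp_all add: t_def field_simps)
  define T where "T = tau t"
  define s where "s = sqrt (T\<^sup>2 - 4)"
  have T: "0 < T"
    using tau_gt_2[OF t] by (simp add: T_def)
  have "f1 b e = (f1_gamma t - f1_alpha t - sqrt ((f1_alpha t - f1_gamma t)\<^sup>2 - 4 * (f1_beta t)\<^sup>2))
      / (2 * f1_beta t)"
    by (simp add: f1_def Let_def f1_alpha_def f1_beta_def f1_gamma_def t_def)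
  also have "sqrt ((f1_alpha t - f1_gamma t)\<^sup>2 - 4 * (f1_beta t)\<^sup>2) = T * s"
    using T by (simp add: f1_discriminant[OF t(1)] real_sqrt_mult s_def flip: T_def)
  also have "(f1_gamma t - f1_alpha t - T * s) / (2 * f1_beta t) = ((t * T + 2 * t - 4) / t - s) / (- 2 * (t - 1))"
    unfolding f1_gamma_minus_alpha[OF t(1)] f1_beta_eq[OF t(1)] T_def[symmetric]
    using t T by (simp add: field_simps)
  also have "s = T - 2 * decay_rate t"
    by (simp add: decay_rate_def s_def T_def field_simps)
  finally show ?thesis
    using t by (simp add: y_ratio_def t_def[symmetric] field_simps)
qed

section \<open>Two-sided sequences\<close>

lemma all_int_split: "(\<forall>n::int. P n) \<longleftrightarrow> (\<forall>m. P (int m)) \<and> (\<forall>m. P (- 1 - int m))"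
proof (intro iffI allI)
  fix n :: int
  assume P: "(\<forall>m. P (int m)) \<and> (\<forall>m. P (- 1 - int m))"
  show "P n"
  proof (cases n rule: int_cases)
    case (neg k)
    then have "n = - 1 - int k"
      by simp
    then show ?thesis
      using P by simp
  qed (use P in simp)
qed simp

lemma nonneg_summable_on_int_iff:
  fixes f :: "int \<Rightarrow> real"
  assumes "\<And>n. 0 \<le> f n"
  shows "f summable_on UNIV \<longleftrightarrow> summable (\<lambda>m. f (int m)) \<and> summable (\<lambda>m. f (- 1 - int m))"
proof -
  have "f summable_on range g \<longleftrightarrow> summable (\<lambda>m. f (g m))" if "inj g" for g :: "nat \<Rightarrow> int"
    using summable_on_reindex[OF that, of f] summable_on_UNIV_nonneg_real_iff[of "f \<circ> g"] assms
    by (simp add: o_def)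
  moreover have "inj (\<lambda>m::nat. - 1 - int m)"
    by (simp add: inj_def)
  moreover have UNIV: "UNIV = range int \<union> range (\<lambda>m::nat. - 1 - int m)"
    using all_int_split[of "\<lambda>n. n \<in> range int \<union> range (\<lambda>m::nat. - 1 - int m)"] by blast
  moreover have "range int \<inter> range (\<lambda>m::nat. - 1 - int m) = {}"
    by auto
  ultimately show ?thesis
    by (metis summable_on_Un_disjoint summable_on_subset_banach sup_ge1 sup_ge2 inj_of_nat)
qed

lemma summable_square_norm_imp_tendsto_zero:
  fixes X :: "nat \<Rightarrow> 'a::real_normed_vector"
  assumes "summable (\<lambda>m. (norm (X m))\<^sup>2)"
  shows "X \<longlonglongrightarrow> 0"
proof -
  have "(\<lambda>m. sqrt ((norm (X m))\<^sup>2)) \<longlonglongrightarrow> sqrt 0"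
    using summable_LIMSEQ_zero[OF assms] by (rule tendsto_real_sqrt)
  then show ?thesis
    by (simp add: tendsto_norm_zero_iff)
qed

lemma l2seq_tendsto_zero:
  assumes "l2seq u"
  shows "(\<lambda>m. u (int m)) \<longlonglongrightarrow> 0" "(\<lambda>m. u (- 1 - int m)) \<longlonglongrightarrow> 0"
  using assms by (simp_all add: l2seq_def nonneg_summable_on_int_iff summable_square_norm_imp_tendsto_zero)

definition two_sided_geom :: "real \<Rightarrow> real \<Rightarrow> 'a::real_vector \<Rightarrow> 'a \<Rightarrow> int \<Rightarrow> 'a" where
  "two_sided_geom r s A B n = (if 0 \<le> n then r ^ nat n *\<^sub>R A else s ^ nat (- 1 - n) *\<^sub>R B)"

lemma two_sided_geom_nonneg [simp]: "two_sided_geom r s A B (int m) = r ^ m *\<^sub>R A"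
  by (simp add: two_sided_geom_def)

lemma two_sided_geom_neg [simp]: "two_sided_geom r s A B (- 1 - int m) = s ^ m *\<^sub>R B"
  by (simp add: two_sided_geom_def)

lemma two_sided_geom_0 [simp]: "two_sided_geom r s A B 0 = A"
  and two_sided_geom_minus_1 [simp]: "two_sided_geom r s A B (- 1) = B"
  by (simp_all add: two_sided_geom_def)

lemma two_sided_geom_eqI:
  assumes "\<And>m. f (int m) = r ^ m *\<^sub>R A" and "\<And>m. f (- 1 - int m) = s ^ m *\<^sub>R B"
  shows "f = two_sided_geom r s A B"
  using assms all_int_split[of "\<lambda>n. f n = two_sided_geom r s A B n"] by auto

lemma two_sided_geom_nth: "two_sided_geom r s V W n $ i = two_sided_geom r s (V $ i) (W $ i) n"
  by (simp add: two_sided_geom_def)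

lemma summable_on_square_norm_two_sided_geom:
  assumes "\<bar>r\<bar> < 1" "\<bar>s\<bar> < 1"
  shows "(\<lambda>n. (norm (two_sided_geom r s A B n))\<^sup>2) summable_on UNIV"
proof -
  have sq: "(norm (x ^ m *\<^sub>R C))\<^sup>2 = (norm C)\<^sup>2 * (x\<^sup>2) ^ m" for x m and C :: 'a
    by (simp add: power_mult_distrib flip: power_mult) (simp add: mult.commute)
  have "summable (\<lambda>m. (norm (two_sided_geom r s A B (int m)))\<^sup>2)"
    and "summable (\<lambda>m. (norm (two_sided_geom r s A B (- 1 - int m)))\<^sup>2)"
    unfolding two_sided_geom_nonneg two_sided_geom_neg sq
    using assms by (simp_all add: summable_mult abs_square_less_1)
  then show ?thesis
    by (simp add: nonneg_summable_on_int_iff)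
qed

section \<open>The zero-energy system at k = 0\<close>

definition zero_mode_eqs :: "real \<Rightarrow> real \<Rightarrow> real \<Rightarrow> real \<Rightarrow> real \<Rightarrow>
    (int \<Rightarrow> 'a::real_vector) \<Rightarrow> (int \<Rightarrow> 'a) \<Rightarrow> (int \<Rightarrow> 'a) \<Rightarrow> bool" where
  "zero_mode_eqs bp bm dp dm c x y z \<longleftrightarrow> (\<forall>n.
     bcoef bp bm n *\<^sub>R x n + bcoef bp bm n *\<^sub>R y n + ccoef bp bm dp dm c (n - 1) *\<^sub>R z (n - 1) = 0 \<and>
     bcoef bp bm n *\<^sub>R x n + dcoef bp bm dp dm n *\<^sub>R y n + bcoef bp bm n *\<^sub>R z n = 0 \<and>
     ccoef bp bm dp dm c n *\<^sub>R x (n + 1) + bcoef bp bm n *\<^sub>R y n + bcoef bp bm n *\<^sub>R z n = 0)"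

lemma zero_mode_eqs_iff:
  "zero_mode_eqs bp bm dp dm c x y z \<longleftrightarrow>
     half_line_eqs bp (bp + dp) (\<lambda>m. x (int m)) (\<lambda>m. y (int m)) (\<lambda>m. z (int m)) \<and>
     half_line_eqs bm (bm + dm) (\<lambda>m. z (- 1 - int m)) (\<lambda>m. y (- 1 - int m)) (\<lambda>m. x (- 1 - int m)) \<and>
     bp *\<^sub>R (x 0 + y 0) + c *\<^sub>R z (- 1) = 0 \<and> c *\<^sub>R x 0 + bm *\<^sub>R (y (- 1) + z (- 1)) = 0"
proof -
  \<comment> \<open>the shapes in which simp leaves the boundary cases n = 0 and n = -1\<close>
  have split_0: "(\<forall>m::nat. (m = 0 \<longrightarrow> A m) \<and> (0 < m \<longrightarrow> B m)) \<longleftrightarrow> A 0 \<and> (\<forall>m. B (Suc m))"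
    and split_Suc: "(\<forall>m::nat. (Suc 0 \<le> m \<longrightarrow> B m) \<and> (\<not> Suc 0 \<le> m \<longrightarrow> A m)) \<longleftrightarrow>
      A 0 \<and> (\<forall>m. B (Suc m))"
    for A B
    by (metis gr0_conv_Suc zero_less_Suc nat.distinct(1),
        metis Suc_le_mono le0 not0_implies_Suc not_less_eq_eq)
  show ?thesis
    unfolding zero_mode_eqs_def half_line_eqs_def all_conj_distrib all_int_split
    by (simp add: bcoef_def ccoef_def dcoef_def split_0 split_Suc algebra_simps) blast
qed

lemma exhaust_6:
  fixes i :: 6
  shows "i = 1 \<or> i = 2 \<or> i = 3 \<or> i = 4 \<or> i = 5 \<or> i = 6"
proof (induct i)
  case (of_int z)
  then have "z = 0 \<or> z = 1 \<or> z = 2 \<or> z = 3 \<or> z = 4 \<or> z = 5"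
    by fastforce
  then show ?case
    by auto
qed

lemma forall_6: "(\<forall>i::6. P i) \<longleftrightarrow> P 1 \<and> P 2 \<and> P 3 \<and> P 4 \<and> P 5 \<and> P 6"
  by (metis exhaust_6)

lemma vector_6 [simp]:
  "(vector [a1, a2, a3, a4, a5, a6] :: 'a::zero ^ 6) $ 1 = a1"
  "(vector [a1, a2, a3, a4, a5, a6] :: 'a ^ 6) $ 2 = a2"
  "(vector [a1, a2, a3, a4, a5, a6] :: 'a ^ 6) $ 3 = a3"
  "(vector [a1, a2, a3, a4, a5, a6] :: 'a ^ 6) $ 4 = a4"
  "(vector [a1, a2, a3, a4, a5, a6] :: 'a ^ 6) $ 5 = a5"
  "(vector [a1, a2, a3, a4, a5, a6] :: 'a ^ 6) $ 6 = a6"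
  by (simp_all add: vector_def)

lemma HI_zero_momentum_kernel_iff:
  "HI bp bm dp dm c 0 u = cscale 0 u \<longleftrightarrow>
     zero_mode_eqs bp bm dp dm c (\<lambda>n. u n $ 1) (\<lambda>n. u n $ 2) (\<lambda>n. u n $ 3) \<and>
     zero_mode_eqs bp bm dp dm c (\<lambda>n. u n $ 4) (\<lambda>n. u n $ 5) (\<lambda>n. u n $ 6)"
proof -
  have neg: "- a * p - q - r = 0 \<longleftrightarrow> a * p + q + r = 0" for a p q r :: complex
    by (metis add_uminus_conv_diff minus_add_distrib minus_mult_left neg_equal_0_iff_equal)
  show ?thesis
    unfolding HI_def Let_def cscale_def zero_mode_eqs_def fun_eq_iff vec_eq_iff forall_6 scaleR_conv_of_real
    by (simp only: vector_6 cis_zero complex_cnj_one mult_1_right neg vector_smult_lzero zero_index) blast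
qed

lemma sym2_kernel_trivial:
  fixes A B :: "'a::real_vector"
  assumes det: "P * Q \<noteq> c\<^sup>2" and eq1: "P *\<^sub>R A + c *\<^sub>R B = 0" and eq2: "c *\<^sub>R A + Q *\<^sub>R B = 0"
  shows "A = 0 \<and> B = 0"
proof -
  have "(P * Q - c\<^sup>2) *\<^sub>R A = Q *\<^sub>R (P *\<^sub>R A + c *\<^sub>R B) - c *\<^sub>R (c *\<^sub>R A + Q *\<^sub>R B)"
    and "(P * Q - c\<^sup>2) *\<^sub>R B = P *\<^sub>R (c *\<^sub>R A + Q *\<^sub>R B) - c *\<^sub>R (P *\<^sub>R A + c *\<^sub>R B)"
    by (simp_all add: algebra_simps power2_eq_square)
  then have "(P * Q - c\<^sup>2) *\<^sub>R A = 0" "(P * Q - c\<^sup>2) *\<^sub>R B = 0"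
    unfolding eq1 eq2 by simp_all
  then show ?thesis
    using det by simp
qed

lemma sym2_kernel_line:
  fixes A B :: "'a::real_vector"
  assumes det: "P * Q = c\<^sup>2" and c: "c \<noteq> 0"
  shows "P *\<^sub>R A + c *\<^sub>R B = 0 \<and> c *\<^sub>R A + Q *\<^sub>R B = 0 \<longleftrightarrow> B = - (P / c) *\<^sub>R A"
proof -
  have "c *\<^sub>R A + Q *\<^sub>R (- (P / c) *\<^sub>R A) = (c - Q * (P / c)) *\<^sub>R A"
    by (simp add: algebra_simps)
  also have "c - Q * (P / c) = 0"
    using det c by (simp add: field_simps power2_eq_square)
  finally have eq2: "c *\<^sub>R A + Q *\<^sub>R (- (P / c) *\<^sub>R A) = 0"
    by simp
  have "P *\<^sub>R A + c *\<^sub>R B = c *\<^sub>R (B + (P / c) *\<^sub>R A)"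
    using c by (simp add: algebra_simps)
  then have eq1: "P *\<^sub>R A + c *\<^sub>R B = 0 \<longleftrightarrow> B = - (P / c) *\<^sub>R A"
    using c by (simp add: eq_neg_iff_add_eq_0)
  show ?thesis
    using eq1 eq2 by auto
qed

lemma (in vector_space) span_pair: "span {a, b} = {scale x a + scale y b | x y. True}"
  by (auto simp: span_insert span_singleton diff_eq_eq; metis add.commute)

interpretation cscale: vector_space cscale
  by unfold_locales (auto simp: cscale_def fun_eq_iff)

section \<open>The zero-energy eigenspace\<close>

locale type_I_interface =
  fixes bp bm dp dm c :: real
  assumes bp_pos: "0 < bp" and bm_pos: "0 < bm"
    and bdp_pos: "0 < bp + dp" and bdm_pos: "0 < bm + dm"
    and dp_nonzero: "dp \<noteq> 0" and dm_nonzero: "dm \<noteq> 0"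
    and c_pos: "0 < c"
begin

definition tp :: real where "tp = (bp + dp) / bp"
definition tm :: real where "tm = (bm + dm) / bm"

lemma tp_pos_ne_1: "0 < tp" "tp \<noteq> 1" and tm_pos_ne_1: "0 < tm" "tm \<noteq> 1"
  using bp_pos bm_pos bdp_pos bdm_pos dp_nonzero dm_nonzero
  by (simp_all add: tp_def tm_def field_simps)

(* The interface equations act on the amplitudes (x_0, z_(-1))
   through the matrix [[Mp, c], [c, Mm]]. *)
definition Mp :: real where "Mp = bp * (1 + y_ratio tp)"
definition Mm :: real where "Mm = bm * (1 + y_ratio tm)"

definition interface_eqs :: "'a::real_vector \<Rightarrow> 'a \<Rightarrow> bool" where
  "interface_eqs A B \<longleftrightarrow> Mp *\<^sub>R A + c *\<^sub>R B = 0 \<and> c *\<^sub>R A + Mm *\<^sub>R B = 0"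

lemma f1_eq_Mp: "(bp + dp) * f1 bp dp = - Mp"
proof -
  have "(bp + dp) * f1 bp dp = bp * (tp * f1 bp dp)"
    using bp_pos by (simp add: tp_def)
  also have "tp * f1 bp dp = - (1 + y_ratio tp)"
    using f1_eq_y_ratio[OF bp_pos bdp_pos dp_nonzero] by (simp only: tp_def)
  finally show ?thesis
    by (simp add: Mp_def algebra_simps)
qed

lemma f1_eq_Mm: "(bm + dm) * f1 bm dm = - Mm"
proof -
  have "(bm + dm) * f1 bm dm = bm * (tm * f1 bm dm)"
    using bm_pos by (simp add: tm_def)
  also have "tm * f1 bm dm = - (1 + y_ratio tm)"
    using f1_eq_y_ratio[OF bm_pos bdm_pos dm_nonzero] by (simp only: tm_def)
  finally show ?thesis
    by (simp add: Mm_def algebra_simps)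
qed

lemma decaying_zero_mode_two_sided_geom:
  fixes x y z :: "int \<Rightarrow> 'a::real_normed_vector"
  assumes eqs: "zero_mode_eqs bp bm dp dm c x y z"
    and x: "(\<lambda>m. x (int m)) \<longlonglongrightarrow> 0" and z: "(\<lambda>m. z (- 1 - int m)) \<longlonglongrightarrow> 0"
  obtains A B where "interface_eqs A B"
    and "x = two_sided_geom (decay_rate tp) (decay_rate tm) A (z_ratio tm *\<^sub>R B)"
    and "y = two_sided_geom (decay_rate tp) (decay_rate tm) (y_ratio tp *\<^sub>R A) (y_ratio tm *\<^sub>R B)"
    and "z = two_sided_geom (decay_rate tp) (decay_rate tm) (z_ratio tp *\<^sub>R A) B"
proof
  have hp: "half_line_eqs 1 tp (\<lambda>m. x (int m)) (\<lambda>m. y (int m)) (\<lambda>m. z (int m))"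
    and hm: "half_line_eqs 1 tm (\<lambda>m. z (- 1 - int m)) (\<lambda>m. y (- 1 - int m)) (\<lambda>m. x (- 1 - int m))"
    and i1: "bp *\<^sub>R (x 0 + y 0) + c *\<^sub>R z (- 1) = 0" and i2: "c *\<^sub>R x 0 + bm *\<^sub>R (y (- 1) + z (- 1)) = 0"
    using eqs bp_pos bm_pos
    by (simp_all add: zero_mode_eqs_iff half_line_eqs_normalize[of bp] half_line_eqs_normalize[of bm]
        flip: tp_def tm_def)
  note p = half_line_eqs_decaying[OF tp_pos_ne_1 hp x, simplified]
  note m = half_line_eqs_decaying[OF tm_pos_ne_1 hm z, simplified]
  show "x = two_sided_geom (decay_rate tp) (decay_rate tm) (x 0) (z_ratio tm *\<^sub>R z (- 1))"
    and "y = two_sided_geom (decay_rate tp) (decay_rate tm) (y_ratio tp *\<^sub>R x 0) (y_ratio tm *\<^sub>R z (- 1))"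
    and "z = two_sided_geom (decay_rate tp) (decay_rate tm) (z_ratio tp *\<^sub>R x 0) (z (- 1))"
    using p m by (auto intro!: two_sided_geom_eqI simp: mult.commute)
  have "y 0 = y_ratio tp *\<^sub>R x 0" and "y (- 1) = y_ratio tm *\<^sub>R z (- 1)"
    using p[of 0] m[of 0] by simp_all
  then show "interface_eqs (x 0) (z (- 1))"
    using i1 i2 by (simp add: interface_eqs_def Mp_def Mm_def algebra_simps)
qed

lemma two_sided_geom_zero_mode:
  assumes "interface_eqs A B"
  shows "zero_mode_eqs bp bm dp dm c
    (two_sided_geom (decay_rate tp) (decay_rate tm) A (z_ratio tm *\<^sub>R B))
    (two_sided_geom (decay_rate tp) (decay_rate tm) (y_ratio tp *\<^sub>R A) (y_ratio tm *\<^sub>R B))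
    (two_sided_geom (decay_rate tp) (decay_rate tm) (z_ratio tp *\<^sub>R A) B)"
  using half_line_eqs_geometric[OF tp_pos_ne_1, of A] half_line_eqs_geometric[OF tm_pos_ne_1, of B]
    assms bp_pos bm_pos
  by (simp add: zero_mode_eqs_iff half_line_eqs_normalize[of bp] half_line_eqs_normalize[of bm]
      interface_eqs_def Mp_def Mm_def algebra_simps flip: tp_def tm_def)

definition zero_mode_vec :: "complex \<Rightarrow> complex \<Rightarrow> complex \<Rightarrow> complex \<Rightarrow> int \<Rightarrow> complex ^ 6" where
  "zero_mode_vec A B A' B' = two_sided_geom (decay_rate tp) (decay_rate tm)
     (vector [A, y_ratio tp *\<^sub>R A, z_ratio tp *\<^sub>R A, A', y_ratio tp *\<^sub>R A', z_ratio tp *\<^sub>R A'])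
     (vector [z_ratio tm *\<^sub>R B, y_ratio tm *\<^sub>R B, B, z_ratio tm *\<^sub>R B', y_ratio tm *\<^sub>R B', B'])"

lemma zero_mode_vec_nth:
  "zero_mode_vec A B A' B' n $ 1 = two_sided_geom (decay_rate tp) (decay_rate tm) A (z_ratio tm *\<^sub>R B) n"
  "zero_mode_vec A B A' B' n $ 2 = two_sided_geom (decay_rate tp) (decay_rate tm) (y_ratio tp *\<^sub>R A) (y_ratio tm *\<^sub>R B) n"
  "zero_mode_vec A B A' B' n $ 3 = two_sided_geom (decay_rate tp) (decay_rate tm) (z_ratio tp *\<^sub>R A) B n"
  "zero_mode_vec A B A' B' n $ 4 = two_sided_geom (decay_rate tp) (decay_rate tm) A' (z_ratio tm *\<^sub>R B') n"
  "zero_mode_vec A B A' B' n $ 5 = two_sided_geom (decay_rate tp) (decay_rate tm) (y_ratio tp *\<^sub>R A') (y_ratio tm *\<^sub>R B') n"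
  "zero_mode_vec A B A' B' n $ 6 = two_sided_geom (decay_rate tp) (decay_rate tm) (z_ratio tp *\<^sub>R A') B' n"
  by (simp_all add: zero_mode_vec_def two_sided_geom_nth)

lemma zero_mode_vec_0: "zero_mode_vec 0 0 0 0 = 0"
  by (simp add: fun_eq_iff vec_eq_iff forall_6 zero_mode_vec_nth two_sided_geom_def)

lemma zero_mode_vec_line:
  "zero_mode_vec A (k *\<^sub>R A) A' (k *\<^sub>R A') =
     cscale A (zero_mode_vec 1 (of_real k) 0 0) + cscale A' (zero_mode_vec 0 0 1 (of_real k))"
  by (simp add: fun_eq_iff vec_eq_iff forall_6 zero_mode_vec_nth cscale_def two_sided_geom_def
      scaleR_conv_of_real algebra_simps)

lemma eigenspace_HI_zero_memD:
  assumes "u \<in> eigenspace_HI bp bm dp dm c 0 0"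
  obtains A B A' B' where "interface_eqs A B" "interface_eqs A' B'" "u = zero_mode_vec A B A' B'"
proof -
  have l2: "l2seq u" and H: "HI bp bm dp dm c 0 u = cscale 0 u"
    using assms by (simp_all add: eigenspace_HI_def)
  have lim: "(\<lambda>m. u (int m) $ i) \<longlonglongrightarrow> 0" "(\<lambda>m. u (- 1 - int m) $ i) \<longlonglongrightarrow> 0" for i
    using tendsto_vec_nth[OF l2seq_tendsto_zero(1)[OF l2]] tendsto_vec_nth[OF l2seq_tendsto_zero(2)[OF l2]]
    by simp_all
  have Z1: "zero_mode_eqs bp bm dp dm c (\<lambda>n. u n $ 1) (\<lambda>n. u n $ 2) (\<lambda>n. u n $ 3)"
    and Z2: "zero_mode_eqs bp bm dp dm c (\<lambda>n. u n $ 4) (\<lambda>n. u n $ 5) (\<lambda>n. u n $ 6)"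
    using H unfolding HI_zero_momentum_kernel_iff by simp_all
  obtain A B where "interface_eqs A B"
    and "(\<lambda>n. u n $ 1) = two_sided_geom (decay_rate tp) (decay_rate tm) A (z_ratio tm *\<^sub>R B)"
    and "(\<lambda>n. u n $ 2) = two_sided_geom (decay_rate tp) (decay_rate tm) (y_ratio tp *\<^sub>R A) (y_ratio tm *\<^sub>R B)"
    and "(\<lambda>n. u n $ 3) = two_sided_geom (decay_rate tp) (decay_rate tm) (z_ratio tp *\<^sub>R A) B"
    by (rule decaying_zero_mode_two_sided_geom[OF Z1 lim])
  moreover obtain A' B' where "interface_eqs A' B'"
    and "(\<lambda>n. u n $ 4) = two_sided_geom (decay_rate tp) (decay_rate tm) A' (z_ratio tm *\<^sub>R B')"
    and "(\<lambda>n. u n $ 5) = two_sided_geom (decay_rate tp) (decay_rate tm) (y_ratio tp *\<^sub>R A') (y_ratio tm *\<^sub>R B')"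
    and "(\<lambda>n. u n $ 6) = two_sided_geom (decay_rate tp) (decay_rate tm) (z_ratio tp *\<^sub>R A') B'"
    by (rule decaying_zero_mode_two_sided_geom[OF Z2 lim])
  moreover from calculation have "u = zero_mode_vec A B A' B'"
    by (simp add: fun_eq_iff vec_eq_iff forall_6 zero_mode_vec_nth)
  ultimately show ?thesis
    using that by blast
qed

lemma zero_mode_vec_mem_eigenspace_HI:
  assumes "interface_eqs A B" "interface_eqs A' B'"
  shows "zero_mode_vec A B A' B' \<in> eigenspace_HI bp bm dp dm c 0 0"
proof -
  have "HI bp bm dp dm c 0 (zero_mode_vec A B A' B') = cscale 0 (zero_mode_vec A B A' B')"
    unfolding HI_zero_momentum_kernel_iff zero_mode_vec_nth
    using two_sided_geom_zero_mode[OF assms(1)] two_sided_geom_zero_mode[OF assms(2)] by simp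
  moreover have "l2seq (zero_mode_vec A B A' B')"
    unfolding l2seq_def zero_mode_vec_def
    using decay_rate_pos_less_1[OF tp_pos_ne_1] decay_rate_pos_less_1[OF tm_pos_ne_1]
    by (intro summable_on_square_norm_two_sided_geom) simp_all
  ultimately show ?thesis
    by (simp add: eigenspace_HI_def)
qed

lemma eigenspace_HI_zero_eq:
  "eigenspace_HI bp bm dp dm c 0 0 =
     {zero_mode_vec A B A' B' | A B A' B'. interface_eqs A B \<and> interface_eqs A' B'}"
  by (blast elim: eigenspace_HI_zero_memD intro: zero_mode_vec_mem_eigenspace_HI)

lemma eigenspace_HI_zero_trivial:
  assumes "Mp * Mm \<noteq> c\<^sup>2"
  shows "eigenspace_HI bp bm dp dm c 0 0 = {0}"
proof -
  have "interface_eqs A B \<longleftrightarrow> A = 0 \<and> B = 0" for A B :: complex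
    using sym2_kernel_trivial[OF assms, of A B] by (auto simp: interface_eqs_def)
  then show ?thesis
    by (simp add: eigenspace_HI_zero_eq zero_mode_vec_0)
qed

lemma eigenspace_HI_zero_span:
  assumes "Mp * Mm = c\<^sup>2"
  defines "k \<equiv> - (Mp / c)"
  shows "eigenspace_HI bp bm dp dm c 0 0 =
    cscale.span {zero_mode_vec 1 (of_real k) 0 0, zero_mode_vec 0 0 1 (of_real k)}"
proof -
  have kernel: "interface_eqs A B \<longleftrightarrow> B = k *\<^sub>R A" for A B :: complex
    using sym2_kernel_line[OF assms(1)] c_pos by (simp add: interface_eqs_def k_def)
  have "eigenspace_HI bp bm dp dm c 0 0 =
      {zero_mode_vec A B A' B' | A B A' B'. B = k *\<^sub>R A \<and> B' = k *\<^sub>R A'}"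
    by (simp only: eigenspace_HI_zero_eq kernel)
  also have "\<dots> = {zero_mode_vec A (k *\<^sub>R A) A' (k *\<^sub>R A') | A A'. True}"
    by blast
  also have "\<dots> = {cscale A (zero_mode_vec 1 (of_real k) 0 0) + cscale A' (zero_mode_vec 0 0 1 (of_real k)) | A A'. True}"
    by (simp only: zero_mode_vec_line)
  finally show ?thesis
    by (simp add: cscale.span_pair)
qed

lemma dim_eigenspace_HI_zero:
  "cscale.dim (eigenspace_HI bp bm dp dm c 0 0) = (if Mp * Mm = c\<^sup>2 then 2 else 0)"
proof (cases "Mp * Mm = c\<^sup>2")
  case False
  then show ?thesis
    using eigenspace_HI_zero_trivial cscale.dim_span_eq_card_independent[OF cscale.independent_empty] by simp
next
  case True
  define U1 where "U1 = zero_mode_vec 1 (of_real (- (Mp / c))) 0 0"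
  define U2 where "U2 = zero_mode_vec 0 0 1 (of_real (- (Mp / c)))"
  have U: "U1 0 $ 1 = 1" "U2 0 $ 1 = 0" "U2 0 $ 4 = 1"
    by (simp_all add: U1_def U2_def zero_mode_vec_nth)
  then have "U1 \<notin> cscale.span {U2}"
    by (auto simp: cscale.span_singleton cscale_def)
  moreover have "U2 \<notin> cscale.span {}"
    using U by auto
  ultimately have "cscale.independent {U1, U2}"
    by (intro cscale.independent_insertI cscale.independent_empty)
  moreover have "U1 \<noteq> U2"
    using U by auto
  ultimately have "cscale.dim (cscale.span {U1, U2}) = 2"
    by (subst cscale.dim_span_eq_card_independent) auto
  then show ?thesis
    using True by (simp only: eigenspace_HI_zero_span[OF True] U1_def U2_def) simp
qed

end

theorem theorem9:
  fixes bp bm dp dm c :: real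
  assumes "bp > 0" and "bm > 0"
    and "bp + dp > 0" and "bm + dm > 0"
    and "dp \<noteq> 0" and "dm \<noteq> 0"
    and "c > 0"
  shows "vector_space.dim cscale (eigenspace_HI bp bm dp dm c 0 0) = 2 \<longleftrightarrow>
         (bp + dp) * (bm + dm) * f1 bp dp * f1 bm dm = c^2"
proof -
  interpret type_I_interface bp bm dp dm c
    using assms by unfold_locales
  have "(bp + dp) * (bm + dm) * f1 bp dp * f1 bm dm = ((bp + dp) * f1 bp dp) * ((bm + dm) * f1 bm dm)"
    by (simp add: ac_simps)
  also have "\<dots> = Mp * Mm"
    by (simp add: f1_eq_Mp f1_eq_Mm)
  finally show ?thesis
    by (simp add: dim_eigenspace_HI_zero)
qed

end
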